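(* The following two identities hold. (i) For all smooth functions $\varrho,a,f$ on $\mathbb{R}^3$, $$\sum_{i_1,i_2,i_3,j_1,j_2,j_3,k_1,k_2,k_3=1}^{3}\varepsilon^{i_1i_2i_3}\varepsilon^{j_1j_2j_3}\varepsilon^{k_1k_2k_3}\,\varrho^2\,\frac{\partial^2\varrho}{\partial x^{i_2}\partial x^{j_1}}\,\frac{\partial^2 a}{\partial x^{i_3}\partial x^{k_1}}\,\frac{\partial^2 a}{\partial x^{j_3}\partial x^{k_2}}\,\frac{\partial^2 a}{\partial x^{j_2}\partial x^{k_3}}\,\frac{\partial f}{\partial x^{i_1}}=0.$$ (ii) For all smooth functions $\varrho,a^1,a^2,f$ on $\mathbb{R}^4$, $$\sum_{\text{all indices}=1}^{4}\varepsilon^{i_1i_2i_3i_4}\varepsilon^{j_1j_2j_3j_4}\varepsilon^{k_1k_2k_3k_4}\,\varrho^2\,\varrho_{i_2j_1}\,a^1_{i_3k_1}\,a^1_{j_3k_2}\,a^1_{j_2k_3}\,a^2_{i_4}\,a^2_{j_4}\,a^2_{k_4}\,f_{i_1}=0,$$ where lower indices denote partial derivatives, e.g. $\varrho_{ij}=\partial^2\varrho/\partial x^i\partial x^j$ and $a^2_{i}=\partial a^2/\partial x^i$. These are, respectively, the formula of the 3D Nambu micro-graph $(0,1,4;1,6,5;4,5,6)$ and of its embedding $(0,1,4,7;1,6,5,8;4,5,6,9)$ into 4D.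
   Context: $\varepsilon^{i_1\dots i_d}$ denotes the Levi-Civita symbol in dimension $d$, and $x^1,\dots,x^d$ are the coordinates on $\mathbb{R}^d$. All sums run over every repeated index from $1$ to $d$. The embedding of a micro-graph from dimension $d$ into dimension $d+1$ is defined as follows: - each Levi-Civita vertex gets one extra, last, outgoing edge to a new terminal vertex carrying a new Casimir function $a^{d-1}$; - all other edges are kept unchanged, with indices now ranging over $1,\dots,d+1$. *)

theory Defs
  imports "HOL-Analysis.Analysis" "HOL-Library.Numeral_Type"
begin

text \<open>Levi-Civita symbol in dimension d = CARD('n), indices in a finite linearly ordered
  type (for the numeral types 3, 4 the order is the standard one 0 < 1 < 2 (< 3),
  corresponding to coordinates x^1, x^2, x^3 (, x^4)).\<close>
definition levi_civita :: "('n::{finite,linorder}) list \<Rightarrow> real" where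
  "levi_civita is =
     (if length is = CARD('n) \<and> distinct is
      then (-1) ^ card {(a, b). a < b \<and> b < length is \<and> is ! b < is ! a}
      else 0)"

definition partial :: "'n::finite \<Rightarrow> (real ^ 'n \<Rightarrow> real) \<Rightarrow> real ^ 'n \<Rightarrow> real" where
  "partial i f = (\<lambda>x. deriv (\<lambda>t. f (x + t *\<^sub>R axis i 1)) 0)"

fun iter_partial :: "'n::finite list \<Rightarrow> (real ^ 'n \<Rightarrow> real) \<Rightarrow> real ^ 'n \<Rightarrow> real" where
  "iter_partial [] f = f"
| "iter_partial (i # is) f = partial i (iter_partial is f)"

definition smooth_fun :: "(real ^ 'n::finite \<Rightarrow> real) \<Rightarrow> bool" where
  "smooth_fun f \<longleftrightarrow> (\<forall>is x. iter_partial is f differentiable (at x))"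

end

theory Submission
  imports Defs
begin

text \<open>Write \<open>A\<close>, \<open>R\<close> for the Hessians of \<open>a\<close> (resp. \<open>a\<^sup>1\<close>) and \<open>\<rho>\<close>, and
  \<open>b\<close> for the gradient of \<open>a\<^sup>2\<close>. Summing over the k-indices first turns the rows
  \<open>A i3\<close>, \<open>A j3\<close>, \<open>A j2\<close> (and, in 4D, \<open>b\<close>) into a totally antisymmetric tensor
  \<open>T i3 j3 j2\<close>. In 3D, \<open>T\<close> is \<open>det A\<close> times the Levi-Civita symbol, and contracting it
  against the second symbol and \<open>R i2 j1\<close> leaves \<open>-2 det A * R i2 i3\<close>, which the first
  symbol annihilates because \<open>R\<close> is symmetric (Schwarz). In 4D, \<open>T\<close> is dual to a vector
  \<open>w\<close>, and the same contraction leaves \<open>2 (b i3 * (R w) i2 - (w \<bullet> b) * R i2 i3)\<close>; against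
  the first symbol and \<open>b i4\<close>, the first term is symmetric in \<open>i3, i4\<close> and the second in
  \<open>i2, i3\<close>, so both vanish.\<close>

lemma has_real_derivative_along_line:
  fixes f :: "'a::real_normed_vector \<Rightarrow> real"
  assumes "f differentiable (at (p + t *\<^sub>R v))"
  shows "((\<lambda>s. f (p + s *\<^sub>R v)) has_real_derivative frechet_derivative f (at (p + t *\<^sub>R v)) v) (at t)"
proof -
  let ?D = "frechet_derivative f (at (p + t *\<^sub>R v))"
  have f': "(f has_derivative ?D) (at (p + t *\<^sub>R v))"
    using assms frechet_derivative_works by blast
  have "((\<lambda>s. p + s *\<^sub>R v) has_derivative (\<lambda>s. s *\<^sub>R v)) (at t)"
    by (auto intro!: derivative_eq_intros)
  from diff_chain_at[OF this f'] have "((\<lambda>s. f (p + s *\<^sub>R v)) has_derivative (\<lambda>s. ?D (s *\<^sub>R v))) (at t)"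
    by (simp add: o_def)
  moreover have "?D (s *\<^sub>R v) = ?D v * s" for s
    using linear_cmul[OF has_derivative_linear[OF f']] by simp
  ultimately show ?thesis
    by (simp add: has_field_derivative_def)
qed

lemma partial_eq_frechet_derivative:
  assumes "f differentiable (at x)"
  shows "partial i f x = frechet_derivative f (at x) (axis i 1)"
  using has_real_derivative_along_line[of f x 0 "axis i 1"] assms
  unfolding partial_def by (simp add: DERIV_imp_deriv)

lemma has_real_derivative_partial:
  assumes "\<And>y. f differentiable (at y)"
  shows "((\<lambda>s. f (p + s *\<^sub>R axis i 1)) has_real_derivative partial i f (p + t *\<^sub>R axis i 1)) (at t)"
  using has_real_derivative_along_line[OF assms] by (simp only: partial_eq_frechet_derivative[OF assms])

lemma second_difference_mean_value:
  fixes f :: "real^'n::finite \<Rightarrow> real"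
  assumes f: "\<And>y. f differentiable (at y)" and fi: "\<And>y. partial i f differentiable (at y)"
    and "h > 0"
  obtains s t where "0 < s" "s < h" "0 < t" "t < h"
    "f (x + h *\<^sub>R axis i 1 + h *\<^sub>R axis j 1) - f (x + h *\<^sub>R axis i 1) - f (x + h *\<^sub>R axis j 1) + f x
      = h\<^sup>2 * partial j (partial i f) (x + s *\<^sub>R axis i 1 + t *\<^sub>R axis j 1)"
proof -
  let ?ei = "axis i 1 :: real^'n" and ?ej = "axis j 1 :: real^'n"
  define \<phi> where "\<phi> s = f (x + h *\<^sub>R ?ej + s *\<^sub>R ?ei) - f (x + s *\<^sub>R ?ei)" for s
  have "(\<phi> has_real_derivative partial i f (x + h *\<^sub>R ?ej + s *\<^sub>R ?ei) - partial i f (x + s *\<^sub>R ?ei)) (at s)"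
    for s unfolding \<phi>_def by (intro DERIV_diff has_real_derivative_partial f)
  then obtain s where s: "0 < s" "s < h" and
    \<phi>: "\<phi> h - \<phi> 0 = h * (partial i f (x + h *\<^sub>R ?ej + s *\<^sub>R ?ei) - partial i f (x + s *\<^sub>R ?ei))"
    using MVT2[OF \<open>h > 0\<close>, of \<phi> "\<lambda>s. partial i f (x + h *\<^sub>R ?ej + s *\<^sub>R ?ei) - partial i f (x + s *\<^sub>R ?ei)"]
    by auto
  define \<psi> where "\<psi> t = partial i f (x + s *\<^sub>R ?ei + t *\<^sub>R ?ej)" for t
  have "(\<psi> has_real_derivative partial j (partial i f) (x + s *\<^sub>R ?ei + t *\<^sub>R ?ej)) (at t)"
    for t unfolding \<psi>_def by (intro has_real_derivative_partial fi)
  then obtain t where t: "0 < t" "t < h" and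
    \<psi>: "\<psi> h - \<psi> 0 = h * partial j (partial i f) (x + s *\<^sub>R ?ei + t *\<^sub>R ?ej)"
    using MVT2[OF \<open>h > 0\<close>, of \<psi> "\<lambda>t. partial j (partial i f) (x + s *\<^sub>R ?ei + t *\<^sub>R ?ej)"]
    by auto
  have "f (x + h *\<^sub>R ?ei + h *\<^sub>R ?ej) - f (x + h *\<^sub>R ?ei) - f (x + h *\<^sub>R ?ej) + f x = \<phi> h - \<phi> 0"
    unfolding \<phi>_def by (simp add: add_ac)
  also have "\<dots> = h * (\<psi> h - \<psi> 0)"
    unfolding \<phi> \<psi>_def by (simp add: add_ac)
  also have "\<dots> = h\<^sup>2 * partial j (partial i f) (x + s *\<^sub>R ?ei + t *\<^sub>R ?ej)"
    unfolding \<psi> by (simp add: power2_eq_square)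
  finally show ?thesis
    by (rule that[OF s t])
qed

lemma mixed_partials_agree_nearby:
  fixes f :: "real^'n::finite \<Rightarrow> real"
  assumes f: "\<And>y. f differentiable (at y)"
    and fi: "\<And>y. partial i f differentiable (at y)" and fj: "\<And>y. partial j f differentiable (at y)"
    and "h > 0"
  obtains y z where "dist y x < 2 * h" "dist z x < 2 * h"
    "partial j (partial i f) y = partial i (partial j f) z"
proof -
  let ?ei = "axis i 1 :: real^'n" and ?ej = "axis j 1 :: real^'n"
  have near: "dist (x + s *\<^sub>R axis a 1 + t *\<^sub>R axis b 1) x < 2 * h"
    if "0 < s" "s < h" "0 < t" "t < h" for s t and a b :: 'n
  proof -
    have "dist (x + s *\<^sub>R axis a 1 + t *\<^sub>R axis b 1) x = norm (s *\<^sub>R axis a 1 + t *\<^sub>R axis b 1 :: real^'n)"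
      by (simp add: dist_norm)
    also have "\<dots> \<le> \<bar>s\<bar> + \<bar>t\<bar>"
      using norm_triangle_ineq[of "s *\<^sub>R axis a 1" "t *\<^sub>R axis b 1 :: real^'n"] by simp
    also have "\<dots> < 2 * h"
      using that by simp
    finally show ?thesis .
  qed
  obtain s1 t1 where st1: "0 < s1" "s1 < h" "0 < t1" "t1 < h" and
    E1: "f (x + h *\<^sub>R ?ei + h *\<^sub>R ?ej) - f (x + h *\<^sub>R ?ei) - f (x + h *\<^sub>R ?ej) + f x
      = h\<^sup>2 * partial j (partial i f) (x + s1 *\<^sub>R ?ei + t1 *\<^sub>R ?ej)"
    using second_difference_mean_value[OF f fi \<open>h > 0\<close>] .
  obtain s2 t2 where st2: "0 < s2" "s2 < h" "0 < t2" "t2 < h" and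
    E2: "f (x + h *\<^sub>R ?ej + h *\<^sub>R ?ei) - f (x + h *\<^sub>R ?ej) - f (x + h *\<^sub>R ?ei) + f x
      = h\<^sup>2 * partial i (partial j f) (x + s2 *\<^sub>R ?ej + t2 *\<^sub>R ?ei)"
    using second_difference_mean_value[OF f fj \<open>h > 0\<close>] .
  have swap: "x + h *\<^sub>R ?ej + h *\<^sub>R ?ei = x + h *\<^sub>R ?ei + h *\<^sub>R ?ej"
    by (simp add: add_ac)
  have "h\<^sup>2 * partial j (partial i f) (x + s1 *\<^sub>R ?ei + t1 *\<^sub>R ?ej)
      = h\<^sup>2 * partial i (partial j f) (x + s2 *\<^sub>R ?ej + t2 *\<^sub>R ?ei)"
    using E1 E2 unfolding swap by linarith
  with \<open>h > 0\<close> have "partial j (partial i f) (x + s1 *\<^sub>R ?ei + t1 *\<^sub>R ?ej)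
      = partial i (partial j f) (x + s2 *\<^sub>R ?ej + t2 *\<^sub>R ?ei)"
    by simp
  with near[OF st1] near[OF st2] show ?thesis
    by (rule that)
qed

lemma partial_commute:
  fixes f :: "real^'n::finite \<Rightarrow> real"
  assumes f: "\<And>y. f differentiable (at y)"
    and fi: "\<And>y. partial i f differentiable (at y)" and fj: "\<And>y. partial j f differentiable (at y)"
    and cont_ij: "continuous (at x) (partial j (partial i f))"
    and cont_ji: "continuous (at x) (partial i (partial j f))"
  shows "partial i (partial j f) x = partial j (partial i f) x"
proof -
  have "\<bar>partial i (partial j f) x - partial j (partial i f) x\<bar> \<le> e" if "e > 0" for e
  proof -
    have "e / 2 > 0"
      using \<open>e > 0\<close> by simp
    then obtain d1 where "d1 > 0"
      and d1: "\<And>y. dist y x < d1 \<Longrightarrow> \<bar>partial j (partial i f) y - partial j (partial i f) x\<bar> < e / 2"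
      using cont_ij unfolding continuous_at_eps_delta dist_real_def by blast
    obtain d2 where "d2 > 0"
      and d2: "\<And>y. dist y x < d2 \<Longrightarrow> \<bar>partial i (partial j f) y - partial i (partial j f) x\<bar> < e / 2"
      using cont_ji \<open>e / 2 > 0\<close> unfolding continuous_at_eps_delta dist_real_def by blast
    have "min d1 d2 / 2 > 0"
      using \<open>d1 > 0\<close> \<open>d2 > 0\<close> by simp
    then obtain y z where near: "dist y x < 2 * (min d1 d2 / 2)" "dist z x < 2 * (min d1 d2 / 2)"
      and yz: "partial j (partial i f) y = partial i (partial j f) z"
      using mixed_partials_agree_nearby[OF f fi fj] by blast
    have "\<bar>partial j (partial i f) y - partial j (partial i f) x\<bar> < e / 2"
      and "\<bar>partial i (partial j f) z - partial i (partial j f) x\<bar> < e / 2"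
      using d1 d2 near by simp_all
    with yz show ?thesis
      by linarith
  qed
  then show ?thesis
    using dense_eq0_I[of "partial i (partial j f) x - partial j (partial i f) x"] by simp
qed

lemma iter_partial_append: "iter_partial (is @ [i]) f = iter_partial is (partial i f)"
  by (induction "is") simp_all

lemma smooth_fun_partial: "smooth_fun f \<Longrightarrow> smooth_fun (partial i f)"
  unfolding smooth_fun_def by (metis iter_partial_append)

lemma smooth_fun_differentiable: "smooth_fun f \<Longrightarrow> f differentiable (at x)"
  unfolding smooth_fun_def by (metis iter_partial.simps(1))

lemma smooth_fun_partial_commute:
  assumes "smooth_fun f"
  shows "partial i (partial j f) x = partial j (partial i f) x"
  using assms by (intro partial_commute smooth_fun_differentiable smooth_fun_partial
      differentiable_imp_continuous_within)

lemma card_inversions: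
  "card {(a, b). a < b \<and> b < (n::nat) \<and> P a b} = (\<Sum>b<n. \<Sum>a<b. of_bool (P a b))"
proof (induction n)
  case 0
  then show ?case by simp
next
  case (Suc n)
  let ?new = "(\<lambda>a. (a, n)) ` {a. a < n \<and> P a n}"
  have split: "{(a, b). a < b \<and> b < Suc n \<and> P a b} = {(a, b). a < b \<and> b < n \<and> P a b} \<union> ?new"
    by (auto simp: less_Suc_eq)
  have "finite {(a, b). a < b \<and> b < n \<and> P a b}"
    by (rule finite_subset[of _ "{..<n} \<times> {..<n}"]) auto
  then have "card {(a, b). a < b \<and> b < Suc n \<and> P a b} = card {(a, b). a < b \<and> b < n \<and> P a b} + card ?new"
    unfolding split by (rule card_Un_disjoint) auto
  also have "card ?new = (\<Sum>a<n. of_bool (P a n))"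
    by (subst card_image) (auto simp: inj_on_def Int_def)
  finally show ?case
    using Suc by simp
qed

lemma levi_civita_eq:
  "levi_civita (xs :: ('n::{finite,linorder}) list) =
     (if length xs = CARD('n) \<and> distinct xs
      then (-1) ^ (\<Sum>b<length xs. \<Sum>a<b. of_bool (xs ! b < xs ! a)) else 0)"
  unfolding levi_civita_def card_inversions ..

lemma UNIV_3_from_0: "(UNIV :: 3 set) = {0, 1, 2}"
proof -
  have "(3::3) = 0" by simp
  then show ?thesis using UNIV_3 by auto
qed

lemma sum_3_from_0: "sum f (UNIV::3 set) = f 0 + f 1 + f 2"
  unfolding UNIV_3_from_0 by (subst sum.insert; simp)+ (simp add: add.assoc)

lemma UNIV_4_from_0: "(UNIV :: 4 set) = {0, 1, 2, 3}"
proof -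
  have "(4::4) = 0" by simp
  then show ?thesis using UNIV_4 by auto
qed

lemma sum_4_from_0: "sum f (UNIV::4 set) = f 0 + f 1 + f 2 + f 3"
  unfolding UNIV_4_from_0 by (subst sum.insert; simp)+ (simp add: add.assoc)

lemmas less_numeral_3_4 = less_bit1_def bit1.Rep_numeral bit1.Rep_1 bit1.Rep_0
  less_bit0_def bit0.Rep_numeral bit0.Rep_1 bit0.Rep_0

lemma levi_civita_3:
  "levi_civita [a, b, c::3] =
    (if distinct [a, b, c] then (-1) ^ (of_bool (b < a) + of_bool (c < a) + of_bool (c < b)) else 0)"
  by (simp add: levi_civita_eq numeral_eq_Suc del: sum_of_bool_eq)

lemma levi_civita_4:
  "levi_civita [a, b, c, d::4] =
    (if distinct [a, b, c, d]
     then (-1) ^ (of_bool (b < a) + of_bool (c < a) + of_bool (c < b) +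
                  of_bool (d < a) + of_bool (d < b) + of_bool (d < c))
     else 0)"
  by (simp add: levi_civita_eq numeral_eq_Suc del: sum_of_bool_eq)

lemma levi_civita_3_sum:
  "(\<Sum>a\<in>UNIV. \<Sum>b\<in>UNIV. \<Sum>c\<in>UNIV. levi_civita [a, b, c::3] * g a b c) =
    g 0 1 2 - g 0 2 1 - g 1 0 2 + g 1 2 0 + g 2 0 1 - g 2 1 0"
  by (simp add: sum_3_from_0 levi_civita_3 less_numeral_3_4)

lemma levi_civita_4_sum:
  "(\<Sum>a\<in>UNIV. \<Sum>b\<in>UNIV. \<Sum>c\<in>UNIV. \<Sum>d\<in>UNIV. levi_civita [a, b, c, d::4] * g a b c d) =
    g 0 1 2 3 - g 0 1 3 2 - g 0 2 1 3 + g 0 2 3 1 + g 0 3 1 2 - g 0 3 2 1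
  - g 1 0 2 3 + g 1 0 3 2 + g 1 2 0 3 - g 1 2 3 0 - g 1 3 0 2 + g 1 3 2 0
  + g 2 0 1 3 - g 2 0 3 1 - g 2 1 0 3 + g 2 1 3 0 + g 2 3 0 1 - g 2 3 1 0
  - g 3 0 1 2 + g 3 0 2 1 + g 3 1 0 2 - g 3 1 2 0 - g 3 2 0 1 + g 3 2 1 0"
  by (simp add: sum_4_from_0 levi_civita_4 less_numeral_3_4)

definition alternating3 :: "('n \<Rightarrow> 'n \<Rightarrow> 'n \<Rightarrow> real) \<Rightarrow> bool" where
  "alternating3 T \<longleftrightarrow> (\<forall>p q r. T q p r = - T p q r) \<and> (\<forall>p q r. T p r q = - T p q r)"

lemma alternating3_sort:
  fixes T :: "('n::linorder) \<Rightarrow> 'n \<Rightarrow> 'n \<Rightarrow> real"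
  assumes "alternating3 T"
  shows "T p p r = 0" "T p q q = 0"
    "q < p \<Longrightarrow> T p q r = - T q p r" "r < q \<Longrightarrow> T p q r = - T p r q"
proof -
  have swap12: "T q p r = - T p q r" and swap23: "T p r q = - T p q r" for p q r
    using assms unfolding alternating3_def by blast+
  show "T p p r = 0" using swap12[of p p r] by simp
  show "T p q q = 0" using swap23[of p q q] by simp
  show "T p q r = - T q p r" using swap12[of q p r] by simp
  show "T p q r = - T p r q" using swap23[of p r q] by simp
qed

lemma exhaust_3_from_0: "(x::3) = 0 \<or> x = 1 \<or> x = 2"
  using UNIV_3_from_0 by blast

lemma exhaust_4_from_0: "(x::4) = 0 \<or> x = 1 \<or> x = 2 \<or> x = 3"
  using UNIV_4_from_0 by blast

lemma levi_civita_3_sum_swap12: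
  "(\<Sum>a\<in>UNIV. \<Sum>b\<in>UNIV. \<Sum>c\<in>UNIV. levi_civita [a, b, c::3] * g b a c) =
   - (\<Sum>a\<in>UNIV. \<Sum>b\<in>UNIV. \<Sum>c\<in>UNIV. levi_civita [a, b, c::3] * g a b c)"
  unfolding levi_civita_3_sum by simp

lemma levi_civita_3_sum_swap23:
  "(\<Sum>a\<in>UNIV. \<Sum>b\<in>UNIV. \<Sum>c\<in>UNIV. levi_civita [a, b, c::3] * g a c b) =
   - (\<Sum>a\<in>UNIV. \<Sum>b\<in>UNIV. \<Sum>c\<in>UNIV. levi_civita [a, b, c::3] * g a b c)"
  unfolding levi_civita_3_sum by simp

lemma levi_civita_4_sum_swap12:
  "(\<Sum>a\<in>UNIV. \<Sum>b\<in>UNIV. \<Sum>c\<in>UNIV. \<Sum>d\<in>UNIV. levi_civita [a, b, c, d::4] * g b a c d) =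
   - (\<Sum>a\<in>UNIV. \<Sum>b\<in>UNIV. \<Sum>c\<in>UNIV. \<Sum>d\<in>UNIV. levi_civita [a, b, c, d::4] * g a b c d)"
  unfolding levi_civita_4_sum by simp

lemma levi_civita_4_sum_swap23:
  "(\<Sum>a\<in>UNIV. \<Sum>b\<in>UNIV. \<Sum>c\<in>UNIV. \<Sum>d\<in>UNIV. levi_civita [a, b, c, d::4] * g a c b d) =
   - (\<Sum>a\<in>UNIV. \<Sum>b\<in>UNIV. \<Sum>c\<in>UNIV. \<Sum>d\<in>UNIV. levi_civita [a, b, c, d::4] * g a b c d)"
  unfolding levi_civita_4_sum by simp

lemma alternating3_levi_civita_3_rows:
  "alternating3 (\<lambda>p q r. \<Sum>k1\<in>UNIV. \<Sum>k2\<in>UNIV. \<Sum>k3\<in>UNIV.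
      levi_civita [k1, k2, k3::3] * (A p k1 * A q k2 * A r k3))"
  unfolding alternating3_def
  using levi_civita_3_sum_swap12[of "\<lambda>k1 k2 k3. A _ k1 * A _ k2 * A _ k3"]
    levi_civita_3_sum_swap23[of "\<lambda>k1 k2 k3. A _ k1 * A _ k2 * A _ k3"]
  by (simp add: mult_ac)

lemma alternating3_levi_civita_4_rows:
  "alternating3 (\<lambda>p q r. \<Sum>k1\<in>UNIV. \<Sum>k2\<in>UNIV. \<Sum>k3\<in>UNIV. \<Sum>k4\<in>UNIV.
      levi_civita [k1, k2, k3, k4::4] * (A p k1 * A q k2 * A r k3 * b k4))"
  unfolding alternating3_def
  using levi_civita_4_sum_swap12[of "\<lambda>k1 k2 k3 k4. A _ k1 * A _ k2 * A _ k3 * b k4"]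
    levi_civita_4_sum_swap23[of "\<lambda>k1 k2 k3 k4. A _ k1 * A _ k2 * A _ k3 * b k4"]
  by (simp add: mult_ac)

lemma alternating3_contract_3:
  fixes T :: "3 \<Rightarrow> 3 \<Rightarrow> 3 \<Rightarrow> real"
  assumes "alternating3 T"
  shows "(\<Sum>j1\<in>UNIV. \<Sum>j2\<in>UNIV. \<Sum>j3\<in>UNIV. levi_civita [j1, j2, j3] * (r j1 * T q j3 j2)) =
    -2 * T 0 1 2 * r q"
  using exhaust_3_from_0[of q]
  by (elim disjE) (simp_all add: levi_civita_3_sum less_numeral_3_4 alternating3_sort[OF assms])

lemma alternating3_contract_4:
  fixes T :: "4 \<Rightarrow> 4 \<Rightarrow> 4 \<Rightarrow> real"
  assumes "alternating3 T"
  obtains w where "\<And>r q. (\<Sum>j1\<in>UNIV. \<Sum>j2\<in>UNIV. \<Sum>j3\<in>UNIV. \<Sum>j4\<in>UNIV.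
      levi_civita [j1, j2, j3, j4] * (r j1 * T q j3 j2 * b j4)) =
    2 * (b q * (\<Sum>s\<in>UNIV. r s * w s) - r q * (\<Sum>s\<in>UNIV. w s * b s))"
proof
  \<comment> \<open>the Hodge dual of \<open>T\<close>\<close>
  define w where "w s = (if s = 0 then - T 1 2 3 else if s = 1 then T 0 2 3
    else if s = 2 then - T 0 1 3 else T 0 1 2)" for s :: 4
  fix r :: "4 \<Rightarrow> real" and q :: 4
  show "(\<Sum>j1\<in>UNIV. \<Sum>j2\<in>UNIV. \<Sum>j3\<in>UNIV. \<Sum>j4\<in>UNIV.
      levi_civita [j1, j2, j3, j4] * (r j1 * T q j3 j2 * b j4)) =
    2 * (b q * (\<Sum>s\<in>UNIV. r s * w s) - r q * (\<Sum>s\<in>UNIV. w s * b s))"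
    unfolding levi_civita_4_sum using exhaust_4_from_0[of q]
    by (elim disjE)
      (simp_all add: w_def sum_4_from_0 less_numeral_3_4 alternating3_sort[OF assms] algebra_simps)
qed

lemma levi_civita_3_micrograph_eq_0:
  fixes R A :: "3 \<Rightarrow> 3 \<Rightarrow> real" and f :: "3 \<Rightarrow> real" and c :: real
  assumes R_sym: "\<And>p q. R p q = R q p"
  shows "(\<Sum>i1\<in>UNIV. \<Sum>i2\<in>UNIV. \<Sum>i3\<in>UNIV. \<Sum>j1\<in>UNIV. \<Sum>j2\<in>UNIV. \<Sum>j3\<in>UNIV.
            \<Sum>k1\<in>UNIV. \<Sum>k2\<in>UNIV. \<Sum>k3\<in>UNIV.
        levi_civita [i1, i2, i3] * levi_civita [j1, j2, j3] * levi_civita [k1, k2, k3] *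
        c * R i2 j1 * A i3 k1 * A j3 k2 * A j2 k3 * f i1) = 0"
    (is "?S = 0")
proof -
  define T where "T p q r = (\<Sum>k1\<in>UNIV. \<Sum>k2\<in>UNIV. \<Sum>k3\<in>UNIV.
     levi_civita [k1, k2, k3] * (A p k1 * A q k2 * A r k3))" for p q r
  have T: "alternating3 T"
    unfolding T_def by (rule alternating3_levi_civita_3_rows)
  have "?S = c * (\<Sum>i1\<in>UNIV. \<Sum>i2\<in>UNIV. \<Sum>i3\<in>UNIV. levi_civita [i1, i2, i3] *
      (f i1 * (\<Sum>j1\<in>UNIV. \<Sum>j2\<in>UNIV. \<Sum>j3\<in>UNIV. levi_civita [j1, j2, j3] * (R i2 j1 * T i3 j3 j2))))"
    unfolding T_def by (simp add: sum_distrib_left mult_ac)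
  also have "\<dots> = c * (\<Sum>i1\<in>UNIV. \<Sum>i2\<in>UNIV. \<Sum>i3\<in>UNIV. levi_civita [i1, i2, i3] *
      (f i1 * (-2 * T 0 1 2 * R i2 i3)))"
    by (simp only: alternating3_contract_3[OF T])
  also have "\<dots> = 0"
    unfolding levi_civita_3_sum using R_sym by (simp add: algebra_simps)
  finally show ?thesis .
qed

lemma levi_civita_4_micrograph_eq_0:
  fixes R A :: "4 \<Rightarrow> 4 \<Rightarrow> real" and b f :: "4 \<Rightarrow> real" and c :: real
  assumes R_sym: "\<And>p q. R p q = R q p"
  shows "(\<Sum>i1\<in>UNIV. \<Sum>i2\<in>UNIV. \<Sum>i3\<in>UNIV. \<Sum>i4\<in>UNIV.
            \<Sum>j1\<in>UNIV. \<Sum>j2\<in>UNIV. \<Sum>j3\<in>UNIV. \<Sum>j4\<in>UNIV.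
            \<Sum>k1\<in>UNIV. \<Sum>k2\<in>UNIV. \<Sum>k3\<in>UNIV. \<Sum>k4\<in>UNIV.
        levi_civita [i1, i2, i3, i4] * levi_civita [j1, j2, j3, j4] *
        levi_civita [k1, k2, k3, k4] *
        c * R i2 j1 * A i3 k1 * A j3 k2 * A j2 k3 * b i4 * b j4 * b k4 * f i1) = 0"
    (is "?S = 0")
proof -
  define T where "T p q r = (\<Sum>k1\<in>UNIV. \<Sum>k2\<in>UNIV. \<Sum>k3\<in>UNIV. \<Sum>k4\<in>UNIV.
     levi_civita [k1, k2, k3, k4] * (A p k1 * A q k2 * A r k3 * b k4))" for p q r
  have T: "alternating3 T"
    unfolding T_def by (rule alternating3_levi_civita_4_rows)
  obtain w where w: "\<And>r q. (\<Sum>j1\<in>UNIV. \<Sum>j2\<in>UNIV. \<Sum>j3\<in>UNIV. \<Sum>j4\<in>UNIV.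
      levi_civita [j1, j2, j3, j4] * (r j1 * T q j3 j2 * b j4)) =
    2 * (b q * (\<Sum>s\<in>UNIV. r s * w s) - r q * (\<Sum>s\<in>UNIV. w s * b s))"
    using alternating3_contract_4[OF T] by blast
  have "?S = c * (\<Sum>i1\<in>UNIV. \<Sum>i2\<in>UNIV. \<Sum>i3\<in>UNIV. \<Sum>i4\<in>UNIV. levi_civita [i1, i2, i3, i4] *
      (f i1 * b i4 * (\<Sum>j1\<in>UNIV. \<Sum>j2\<in>UNIV. \<Sum>j3\<in>UNIV. \<Sum>j4\<in>UNIV.
        levi_civita [j1, j2, j3, j4] * (R i2 j1 * T i3 j3 j2 * b j4))))"
    unfolding T_def by (simp add: sum_distrib_left mult_ac)
  also have "\<dots> = c * (\<Sum>i1\<in>UNIV. \<Sum>i2\<in>UNIV. \<Sum>i3\<in>UNIV. \<Sum>i4\<in>UNIV. levi_civita [i1, i2, i3, i4] *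
      (f i1 * b i4 * (2 * (b i3 * (\<Sum>s\<in>UNIV. R i2 s * w s) - R i2 i3 * (\<Sum>s\<in>UNIV. w s * b s)))))"
    by (simp only: w)
  also have "\<dots> = 0"
    unfolding levi_civita_4_sum using R_sym by (simp add: algebra_simps)
  finally show ?thesis .
qed

theorem mainTheorem2:
  shows "(\<forall>(\<rho>::real^3 \<Rightarrow> real) a f. smooth_fun \<rho> \<and> smooth_fun a \<and> smooth_fun f \<longrightarrow>
     (\<forall>x. (\<Sum>i1\<in>UNIV. \<Sum>i2\<in>UNIV. \<Sum>i3\<in>UNIV. \<Sum>j1\<in>UNIV. \<Sum>j2\<in>UNIV. \<Sum>j3\<in>UNIV.
            \<Sum>k1\<in>UNIV. \<Sum>k2\<in>UNIV. \<Sum>k3\<in>UNIV.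
        levi_civita [i1, i2, i3] * levi_civita [j1, j2, j3] * levi_civita [k1, k2, k3] *
        (\<rho> x)^2 * partial i2 (partial j1 \<rho>) x *
        partial i3 (partial k1 a) x * partial j3 (partial k2 a) x * partial j2 (partial k3 a) x *
        partial i1 f x) = 0))
   \<and>
   (\<forall>(\<rho>::real^4 \<Rightarrow> real) a1 a2 f.
      smooth_fun \<rho> \<and> smooth_fun a1 \<and> smooth_fun a2 \<and> smooth_fun f \<longrightarrow>
     (\<forall>x. (\<Sum>i1\<in>UNIV. \<Sum>i2\<in>UNIV. \<Sum>i3\<in>UNIV. \<Sum>i4\<in>UNIV.
            \<Sum>j1\<in>UNIV. \<Sum>j2\<in>UNIV. \<Sum>j3\<in>UNIV. \<Sum>j4\<in>UNIV.
            \<Sum>k1\<in>UNIV. \<Sum>k2\<in>UNIV. \<Sum>k3\<in>UNIV. \<Sum>k4\<in>UNIV.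
        levi_civita [i1, i2, i3, i4] * levi_civita [j1, j2, j3, j4] *
        levi_civita [k1, k2, k3, k4] *
        (\<rho> x)^2 * partial i2 (partial j1 \<rho>) x *
        partial i3 (partial k1 a1) x * partial j3 (partial k2 a1) x *
        partial j2 (partial k3 a1) x *
        partial i4 a2 x * partial j4 a2 x * partial k4 a2 x *
        partial i1 f x) = 0))"
  by (intro conjI allI impI levi_civita_3_micrograph_eq_0 levi_civita_4_micrograph_eq_0)
    (auto intro: smooth_fun_partial_commute)

end
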